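(* Let $\psi\in\mathbb C^n$ with $\|\psi\|=1$, $\hbar>0$, $H$ an $n\times n$ Hermitian matrix and $\xi$ an $n\times n$ skew-Hermitian matrix. Then $$[\,i\hbar\xi-H,\ \psi\psi^\dagger\,]=0$$ holds if and only if there exists a skew-Hermitian matrix $\kappa$ such that $$\xi+i\hbar^{-1}H=\{\mathbf 1-2\psi\psi^\dagger,\kappa\}.$$ Moreover, in that case $\xi\psi=-i\hbar^{-1}H\psi-2(\psi^\dagger\kappa\psi)\psi$, where $-2i\hbar\,\psi^\dagger\kappa\psi$ is real; hence if $\psi(t)$ satisfies $\dot\psi=\xi\psi$ with such $\xi(t),\kappa(t)$, then $i\hbar\dot\psi=H\psi+\alpha\psi$ with the real function $\alpha(t)=-2i\hbar\,\psi^\dagger\kappa\psi$.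
   Context: $\{A,B\}=AB+BA$ denotes the anticommutator and $[A,B]=AB-BA$ the commutator; $\mathbf 1$ is the identity matrix. *)

theory Defs
  imports "HOL-Analysis.Analysis"
begin

definition cadj :: "complex^'n^'m \<Rightarrow> complex^'m^'n" where
  "cadj A = (\<chi> i j. cnj (A $ j $ i))"

definition hermitian :: "complex^'n^'n \<Rightarrow> bool" where
  "hermitian A \<longleftrightarrow> cadj A = A"

definition skew_hermitian :: "complex^'n^'n \<Rightarrow> bool" where
  "skew_hermitian A \<longleftrightarrow> cadj A = - A"

definition outer :: "complex^'n \<Rightarrow> complex^'n \<Rightarrow> complex^'n^'n" where
  "outer u v = (\<chi> i j. u $ i * cnj (v $ j))"

definition braket :: "complex^'n \<Rightarrow> complex^'n^'n \<Rightarrow> complex^'n \<Rightarrow> complex" where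
  "braket u A v = (\<Sum>i\<in>UNIV. cnj (u $ i) * ((A *v v) $ i))"

definition cmat_scale :: "complex \<Rightarrow> complex^'n^'m \<Rightarrow> complex^'n^'m" where
  "cmat_scale c A = (\<chi> i j. c * A $ i $ j)"

definition commutator :: "complex^'n^'n \<Rightarrow> complex^'n^'n \<Rightarrow> complex^'n^'n" where
  "commutator A B = A ** B - B ** A"

definition anticommutator :: "complex^'n^'n \<Rightarrow> complex^'n^'n \<Rightarrow> complex^'n^'n" where
  "anticommutator A B = A ** B + B ** A"

end

theory Submission
  imports Defs
begin

text \<open>With \<open>M = \<xi> + i\<hbar>\<inverse>H\<close> one has \<open>i\<hbar>\<xi> - H = i\<hbar>M\<close>, and \<open>M\<close> is
  skew-Hermitian. Commuting with the projector \<open>P = \<psi>\<psi>\<^sup>\<dagger>\<close> is the same as commuting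
  with the Hermitian involution \<open>U = 1 - 2P\<close>, and a skew-Hermitian matrix commutes with \<open>U\<close>
  exactly when it is of the form \<open>{U, \<kappa>}\<close> with \<open>\<kappa>\<close> skew-Hermitian: take \<open>\<kappa> = UM/2\<close>
  one way, and use \<open>U\<^sup>2 = 1\<close> the other way. Since \<open>U\<psi> = -\<psi>\<close>, we get
  \<open>{U, \<kappa>}\<psi> = -2(\<psi>\<^sup>\<dagger>\<kappa>\<psi>)\<psi>\<close>, and \<open>\<psi>\<^sup>\<dagger>\<kappa>\<psi>\<close> is purely imaginary because \<open>\<kappa>\<close>
  is skew-Hermitian.\<close>

lemma matrix_add_rdistrib: "((A :: 'a::semiring_1^'n^'m) + B) ** (C :: 'a^'k^'n) = A ** C + B ** C"
  by (simp add: vec_eq_iff matrix_matrix_mult_def sum.distrib algebra_simps)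

lemma matrix_diff_ldistrib: "(A :: 'a::ring_1^'n^'m) ** ((B :: 'a^'k^'n) - C) = A ** B - A ** C"
  by (simp add: vec_eq_iff matrix_matrix_mult_def sum_subtractf algebra_simps)

lemma matrix_diff_rdistrib: "((A :: 'a::ring_1^'n^'m) - B) ** (C :: 'a^'k^'n) = A ** C - B ** C"
  by (simp add: vec_eq_iff matrix_matrix_mult_def sum_subtractf algebra_simps)

lemma matrix_minus_mult: "(- (A :: 'a::ring_1^'n^'m)) ** (B :: 'a^'k^'n) = - (A ** B)"
  by (simp add: vec_eq_iff matrix_matrix_mult_def sum_negf)

lemma cmat_scale_mult_left: "cmat_scale c A ** B = cmat_scale c (A ** B)"
  by (simp add: vec_eq_iff matrix_matrix_mult_def cmat_scale_def sum_distrib_left algebra_simps)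

lemma cmat_scale_mult_right: "A ** cmat_scale c B = cmat_scale c (A ** B)"
  by (simp add: vec_eq_iff matrix_matrix_mult_def cmat_scale_def sum_distrib_left algebra_simps)

lemma cmat_scale_mult_vec: "cmat_scale c A *v v = c *s (A *v v)"
  by (simp add: vec_eq_iff matrix_vector_mult_def cmat_scale_def sum_distrib_left algebra_simps)

lemma cmat_scale_scale: "cmat_scale a (cmat_scale b A) = cmat_scale (a * b) A"
  by (simp add: vec_eq_iff cmat_scale_def)

lemma cmat_scale_diff_right: "cmat_scale c (A - B) = cmat_scale c A - cmat_scale c B"
  by (simp add: vec_eq_iff cmat_scale_def algebra_simps)

lemma cmat_scale_minus_right: "cmat_scale c (- A) = - cmat_scale c A"
  by (simp add: vec_eq_iff cmat_scale_def)

lemma cmat_scale_minus_left: "cmat_scale (- c) A = - cmat_scale c A"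
  by (simp add: vec_eq_iff cmat_scale_def)

lemma cmat_scale_one [simp]: "cmat_scale 1 A = A"
  by (simp add: vec_eq_iff cmat_scale_def)

lemma cmat_scale_eq_0_iff: "cmat_scale c A = 0 \<longleftrightarrow> c = 0 \<or> A = 0"
  by (auto simp: vec_eq_iff cmat_scale_def)

lemma cadj_matrix_mult: "cadj (A ** B) = cadj B ** cadj A"
  by (simp add: vec_eq_iff matrix_matrix_mult_def cadj_def mult.commute)

lemma cadj_add: "cadj (A + B) = cadj A + cadj B"
  by (simp add: vec_eq_iff cadj_def)

lemma cadj_diff: "cadj (A - B) = cadj A - cadj B"
  by (simp add: vec_eq_iff cadj_def)

lemma cadj_cmat_scale: "cadj (cmat_scale c A) = cmat_scale (cnj c) (cadj A)"
  by (simp add: vec_eq_iff cadj_def cmat_scale_def)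

lemma cadj_mat1: "cadj (mat 1) = mat 1"
  by (simp add: vec_eq_iff cadj_def mat_def)

lemma cadj_outer: "cadj (outer u v) = outer v u"
  by (simp add: vec_eq_iff cadj_def outer_def mult.commute)

lemma commutator_cmat_scale_left: "commutator (cmat_scale c A) B = cmat_scale c (commutator A B)"
  by (simp add: commutator_def cmat_scale_mult_left cmat_scale_mult_right cmat_scale_diff_right)

lemma commutator_mat1_diff_cmat_scale:
  "commutator A (mat 1 - cmat_scale c P) = cmat_scale (- c) (commutator A P)"
  by (simp add: commutator_def matrix_diff_ldistrib matrix_diff_rdistrib cmat_scale_mult_left
      cmat_scale_mult_right cmat_scale_diff_right cmat_scale_minus_left)

lemma braket_mat1: "braket u (mat 1) v = (\<Sum>i\<in>UNIV. cnj (u $ i) * v $ i)"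
  by (simp add: braket_def)

lemma braket_mat1_self: "braket v (mat 1) v = of_real ((norm v)\<^sup>2)"
proof -
  have "braket v (mat 1) v = (\<Sum>i\<in>UNIV. of_real ((norm (v $ i))\<^sup>2))"
    unfolding braket_mat1 by (intro sum.cong refl) (simp only: complex_norm_square mult.commute)
  also have "\<dots> = of_real (\<Sum>i\<in>UNIV. (norm (v $ i))\<^sup>2)"
    by simp
  also have "\<dots> = of_real ((norm v)\<^sup>2)"
    by (simp add: norm_vec_def L2_set_def sum_nonneg)
  finally show ?thesis .
qed

lemma braket_mat1_mult_vec: "braket u (mat 1) (A *v v) = braket u A v"
  by (simp add: braket_def)

lemma braket_skew_hermitian_Re:
  assumes "skew_hermitian K"
  shows "Re (braket v K v) = 0"
proof -
  have K: "cnj (K $ i $ j) = - K $ j $ i" for i j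
    using arg_cong[OF assms[unfolded skew_hermitian_def], of "\<lambda>A. A $ j $ i"]
    by (simp add: cadj_def)
  have "cnj (braket v K v) = (\<Sum>i\<in>UNIV. \<Sum>j\<in>UNIV. - (cnj (v $ j) * (K $ j $ i * v $ i)))"
    by (simp add: braket_def matrix_vector_mult_def sum_distrib_left K algebra_simps)
  also have "\<dots> = - braket v K v"
    by (subst sum.swap) (simp add: braket_def matrix_vector_mult_def sum_distrib_left sum_negf)
  finally have "Re (cnj (braket v K v)) = Re (- braket v K v)"
    by (rule arg_cong)
  then show ?thesis
    by simp
qed

lemma outer_mult_outer: "outer u v ** outer w z = cmat_scale (braket v (mat 1) w) (outer u z)"
  by (simp add: vec_eq_iff matrix_matrix_mult_def outer_def cmat_scale_def braket_mat1
      sum_distrib_left algebra_simps)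

lemma outer_mult_vec: "outer u v *v w = braket v (mat 1) w *s u"
  by (simp add: vec_eq_iff matrix_vector_mult_def outer_def braket_mat1 sum_distrib_left algebra_simps)

lemma outer_self_idempotent:
  assumes "norm v = 1"
  shows "outer v v ** outer v v = outer v v"
  by (simp add: outer_mult_outer braket_mat1_self assms)

lemma commutator_eq_0_iff_anticommutator:
  assumes UU: "U ** U = mat 1" and "hermitian U" and "skew_hermitian M"
  shows "commutator M U = 0 \<longleftrightarrow> (\<exists>\<kappa>. skew_hermitian \<kappa> \<and> M = anticommutator U \<kappa>)"
proof
  assume "commutator M U = 0"
  then have comm: "M ** U = U ** M"
    by (simp add: commutator_def)
  define \<kappa> where "\<kappa> = cmat_scale (1/2) (U ** M)"
  have "skew_hermitian \<kappa>"
    using assms(2,3) comm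
    by (simp add: \<kappa>_def hermitian_def skew_hermitian_def cadj_cmat_scale cadj_matrix_mult
        matrix_minus_mult cmat_scale_minus_left cmat_scale_minus_right)
  moreover have "M = anticommutator U \<kappa>"
  proof -
    have "anticommutator U \<kappa> = cmat_scale (1/2) ((U ** U) ** M) + cmat_scale (1/2) (U ** (M ** U))"
      by (simp add: anticommutator_def \<kappa>_def cmat_scale_mult_left cmat_scale_mult_right matrix_mul_assoc)
    also have "\<dots> = M"
      by (simp add: comm matrix_mul_assoc UU vec_eq_iff cmat_scale_def)
    finally show ?thesis
      by simp
  qed
  ultimately show "\<exists>\<kappa>. skew_hermitian \<kappa> \<and> M = anticommutator U \<kappa>"
    by blast
next
  assume "\<exists>\<kappa>. skew_hermitian \<kappa> \<and> M = anticommutator U \<kappa>"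
  then obtain \<kappa> where M: "M = anticommutator U \<kappa>"
    by blast
  have "U ** M = \<kappa> + U ** \<kappa> ** U" and "M ** U = U ** \<kappa> ** U + \<kappa>"
    by (simp_all add: M anticommutator_def matrix_add_ldistrib matrix_add_rdistrib
        matrix_mul_assoc[symmetric] UU) (simp add: matrix_mul_assoc UU)
  then show "commutator M U = 0"
    by (simp add: commutator_def add.commute)
qed

definition householder :: "complex^'n \<Rightarrow> complex^'n^'n" where
  "householder v = mat 1 - cmat_scale 2 (outer v v)"

lemma hermitian_householder: "hermitian (householder v)"
  by (simp add: hermitian_def householder_def cadj_diff cadj_cmat_scale cadj_mat1 cadj_outer)

lemma householder_involution:
  assumes "norm v = 1"
  shows "householder v ** householder v = mat 1"
  by (simp add: householder_def matrix_diff_ldistrib matrix_diff_rdistrib cmat_scale_mult_left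
      cmat_scale_mult_right cmat_scale_scale outer_self_idempotent[OF assms])
    (simp add: vec_eq_iff cmat_scale_def)

lemma householder_mult_vec: "householder v *v w = w - (2 * braket v (mat 1) w) *s v"
  by (simp add: householder_def matrix_vector_mult_diff_rdistrib cmat_scale_mult_vec outer_mult_vec)

lemma anticommutator_householder_mult_self:
  assumes "norm v = 1"
  shows "anticommutator (householder v) K *v v = - (2 * braket v K v) *s v"
proof -
  have reflect: "householder v *v v = - v"
    by (simp add: householder_mult_vec braket_mat1_self assms vec_eq_iff)
  have "anticommutator (householder v) K *v v = householder v *v (K *v v) + K *v (householder v *v v)"
    by (simp add: anticommutator_def matrix_vector_mult_add_rdistrib matrix_vector_mul_assoc)
  also have "\<dots> = (K *v v - (2 * braket v K v) *s v) + K *v (- v)"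
    unfolding reflect by (simp only: householder_mult_vec braket_mat1_mult_vec)
  also have "\<dots> = - (2 * braket v K v) *s v"
    by (simp add: vec_eq_iff matrix_vector_mult_def sum_negf)
  finally show ?thesis .
qed

lemma skew_hermitian_add_imaginary_scale:
  assumes "skew_hermitian \<xi>" and "hermitian H" and "cnj c = - c"
  shows "skew_hermitian (\<xi> + cmat_scale c H)"
  using assms by (simp add: skew_hermitian_def hermitian_def cadj_add cadj_cmat_scale
      cmat_scale_minus_left)

lemma commutator_projector_eq_0_iff_anticommutator:
  fixes hbar :: real
  assumes "norm \<psi> = 1" and "hbar \<noteq> 0" and "hermitian H" and "skew_hermitian \<xi>"
  shows "commutator (cmat_scale (\<i> * of_real hbar) \<xi> - H) (outer \<psi> \<psi>) = 0
    \<longleftrightarrow> (\<exists>\<kappa>. skew_hermitian \<kappa>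
          \<and> \<xi> + cmat_scale (\<i> / of_real hbar) H = anticommutator (householder \<psi>) \<kappa>)"
proof -
  define M where "M = \<xi> + cmat_scale (\<i> / of_real hbar) H"
  have "cmat_scale (\<i> * of_real hbar) \<xi> - H = cmat_scale (\<i> * of_real hbar) M"
    using assms(2) by (simp add: M_def vec_eq_iff cmat_scale_def field_simps)
  then have "commutator (cmat_scale (\<i> * of_real hbar) \<xi> - H) (outer \<psi> \<psi>) = 0
      \<longleftrightarrow> commutator M (householder \<psi>) = 0"
    using assms(2) by (simp add: householder_def commutator_cmat_scale_left
        commutator_mat1_diff_cmat_scale cmat_scale_eq_0_iff)
  also have "\<dots> \<longleftrightarrow> (\<exists>\<kappa>. skew_hermitian \<kappa> \<and> M = anticommutator (householder \<psi>) \<kappa>)"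
  proof (rule commutator_eq_0_iff_anticommutator)
    show "skew_hermitian M"
      unfolding M_def using assms(4,3) by (rule skew_hermitian_add_imaginary_scale) simp
  qed (use assms(1) in \<open>simp_all add: householder_involution hermitian_householder\<close>)
  finally show ?thesis
    by (simp add: M_def)
qed

lemma generator_mult_state:
  assumes "norm v = 1" and "\<xi> + cmat_scale c H = anticommutator (householder v) K"
  shows "\<xi> *v v = - (c *s (H *v v)) - (2 * braket v K v) *s v"
proof -
  have "\<xi> = anticommutator (householder v) K - cmat_scale c H"
    using assms(2) by (simp add: algebra_simps)
  then show ?thesis
    by (simp add: matrix_vector_mult_diff_rdistrib anticommutator_householder_mult_self[OF assms(1)]
        cmat_scale_mult_vec)
qed

lemma schroedinger_equation_with_phase:
  fixes hbar :: real and \<Psi> :: "real \<Rightarrow> complex^'n"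
  assumes "norm (\<Psi> t) = 1" and "hbar \<noteq> 0"
    and "\<Xi> + cmat_scale (\<i> / of_real hbar) H = anticommutator (householder (\<Psi> t)) K"
    and "(\<Psi> has_vector_derivative (\<Xi> *v \<Psi> t)) (at t)"
  shows "(\<i> * of_real hbar) *s vector_derivative \<Psi> (at t)
    = H *v \<Psi> t + (- 2 * \<i> * of_real hbar * braket (\<Psi> t) K (\<Psi> t)) *s \<Psi> t"
  using assms(2)
  by (simp add: vector_derivative_at[OF assms(4)] generator_mult_state[OF assms(1,3)]
      vec_eq_iff field_simps)

theorem mainTheorem3:
  fixes psi :: "complex^'n" and hbar :: real and H xi :: "complex^'n^'n"
  assumes "norm psi = 1" and "hbar > 0" and "hermitian H" and "skew_hermitian xi"
  shows
   "(commutator (cmat_scale (\<i> * of_real hbar) xi - H) (outer psi psi) = 0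
      \<longleftrightarrow> (\<exists>\<kappa>. skew_hermitian \<kappa> \<and>
             xi + cmat_scale (\<i> / of_real hbar) H
               = anticommutator (mat 1 - cmat_scale 2 (outer psi psi)) \<kappa>))
    \<and> (\<forall>\<kappa>. skew_hermitian \<kappa> \<and>
           xi + cmat_scale (\<i> / of_real hbar) H
             = anticommutator (mat 1 - cmat_scale 2 (outer psi psi)) \<kappa>
         \<longrightarrow> xi *v psi = - ((\<i> / of_real hbar) *s (H *v psi))
                             - (2 * braket psi \<kappa> psi) *s psi
           \<and> - 2 * \<i> * of_real hbar * braket psi \<kappa> psi \<in> \<real>)
    \<and> (\<forall>(Psi :: real \<Rightarrow> complex^'n) Xi K.
         (\<forall>t. norm (Psi t) = 1 \<and> skew_hermitian (Xi t) \<and> skew_hermitian (K t)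
              \<and> Xi t + cmat_scale (\<i> / of_real hbar) H
                  = anticommutator (mat 1 - cmat_scale 2 (outer (Psi t) (Psi t))) (K t)
              \<and> (Psi has_vector_derivative (Xi t *v Psi t)) (at t))
         \<longrightarrow> (\<forall>t. - 2 * \<i> * of_real hbar * braket (Psi t) (K t) (Psi t) \<in> \<real>
                 \<and> (\<i> * of_real hbar) *s vector_derivative Psi (at t)
                     = H *v Psi t
                       + (- 2 * \<i> * of_real hbar * braket (Psi t) (K t) (Psi t)) *s Psi t))"
proof -
  have hbar: "hbar \<noteq> 0"
    using assms(2) by simp
  have phase_real: "- 2 * \<i> * of_real hbar * braket v K v \<in> \<real>" if "skew_hermitian K" for v K
    using braket_skew_hermitian_Re[OF that] by (simp add: complex_is_Real_iff)
  show ?thesis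
    unfolding householder_def[symmetric]
    using commutator_projector_eq_0_iff_anticommutator[OF assms(1) hbar assms(3,4)]
      generator_mult_state[OF assms(1)] phase_real schroedinger_equation_with_phase[OF _ hbar]
    by blast
qed

end
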